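(* Let $x_1,\dots,x_n\in\mathbb{R}^2$ satisfy $x_i\prec x_j$ whenever $i<j$, and let $p\ge2$. For $k\in\{2,\dots,p\}$ and $i\in\{k,\dots,n\}$, let $C^{MM}_{k,i}$ be the optimal value of the Max-Min $k$-dispersion problem among the points $x_1,\dots,x_i$, i.e. $C^{MM}_{k,i}=\max_{1\le i_1<\dots<i_k\le i}\min_{1\le a<b\le k}d_{i_a,i_b}$. Then $C^{MM}_{2,i}=d_{1,i}$ for all $i\in\{2,\dots,n\}$, and for all $k\in\{3,\dots,p\}$ and $i\in\{k,\dots,n\}$, $$C^{MM}_{k,i}=\max_{j\in\{k-1,\dots,i-1\}}\min\left(C^{MM}_{k-1,j},\,d_{j,i}\right).$$
   Context: For $y=(y^1,y^2),z=(z^1,z^2)\in\mathbb{R}^2$ write $y\prec z$ iff $y^1<z^1$ and $y^2>z^2$. Fix $\alpha>0$, let $d$ be the Euclidean distance, and set $d_{ij}=d(x_i,x_j)^\alpha$. *)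

theory Defs
  imports "HOL-Analysis.Analysis"
begin

definition prec :: "real^2 \<Rightarrow> real^2 \<Rightarrow> bool" where
  "prec y z \<longleftrightarrow> y$1 < z$1 \<and> y$2 > z$2"

definition dd :: "real \<Rightarrow> (nat \<Rightarrow> real^2) \<Rightarrow> nat \<Rightarrow> nat \<Rightarrow> real" where
  "dd \<alpha> x i j = dist (x i) (x j) powr \<alpha>"

definition CMM :: "real \<Rightarrow> (nat \<Rightarrow> real^2) \<Rightarrow> nat \<Rightarrow> nat \<Rightarrow> real" where
  "CMM \<alpha> x k i = Max ((\<lambda>S. Min {dd \<alpha> x a b | a b. a \<in> S \<and> b \<in> S \<and> a < b})
                       ` {S. S \<subseteq> {1..i} \<and> card S = k})"

end

theory Submission
  imports Defs
begin

text \<open>Along a \<open>\<prec>\<close>-chain the points move right and down, so consecutive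
  displacements have positive inner product; hence widening a pair of indices \<open>a < b\<close> to
  \<open>a' \<le> a < b \<le> b'\<close> never decreases \<open>d\<close>. For a \<open>k\<close>-subset \<open>S\<close> with two largest elements
  \<open>j < m\<close>, the pairs of \<open>S\<close> are those of \<open>S - {m}\<close> (a \<open>(k-1)\<close>-subset of \<open>{1..j}\<close>) together
  with pairs \<open>(a, m)\<close>, whose smallest value is \<open>d j m \<le> d j i\<close>. Conversely, adding \<open>i\<close> to an
  optimal \<open>(k-1)\<close>-subset of \<open>{1..j}\<close> creates only pairs \<open>(a, i)\<close> with \<open>d a i \<ge> d j i\<close>.
  The same monotonicity gives \<open>C\<^sub>2\<^sub>,\<^sub>i = d\<^sub>1\<^sub>,\<^sub>i\<close>.\<close>

lemma dist_le_dist_if_inner_nonneg: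
  fixes a b c :: "'a::real_inner"
  assumes "0 \<le> inner (b - a) (c - b)"
  shows "dist a b \<le> dist a c" and "dist b c \<le> dist a c"
proof -
  have "b - a + (c - b) = c - a"
    by simp
  then have "inner (b - a) (c - b) = ((dist c a)\<^sup>2 - (dist b a)\<^sup>2 - (dist c b)\<^sup>2) / 2"
    unfolding dist_norm by (simp only: dot_norm)
  then have "(dist c a)\<^sup>2 = (dist b a)\<^sup>2 + (dist c b)\<^sup>2 + 2 * inner (b - a) (c - b)"
    by (simp add: field_simps)
  then have "(dist b a)\<^sup>2 \<le> (dist c a)\<^sup>2" and "(dist c b)\<^sup>2 \<le> (dist c a)\<^sup>2"
    using assms zero_le_power2[of "dist b a"] zero_le_power2[of "dist c b"] by linarith+
  then have "dist b a \<le> dist c a" and "dist c b \<le> dist c a"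
    using power2_le_imp_le zero_le_dist by blast+
  then show "dist a b \<le> dist a c" and "dist b c \<le> dist a c"
    by (simp_all only: dist_commute)
qed

lemma inner_pos_if_prec:
  assumes "prec a b" and "prec b c"
  shows "0 < inner (b - a) (c - b)"
proof -
  have "0 < (b$1 - a$1) * (c$1 - b$1)" and "0 < (b$2 - a$2) * (c$2 - b$2)"
    using assms by (auto simp: prec_def intro: mult_neg_neg)
  then show ?thesis
    by (simp add: inner_vec_def sum_2)
qed

definition span_mono :: "nat \<Rightarrow> (nat \<Rightarrow> nat \<Rightarrow> 'a::linorder) \<Rightarrow> bool" where
  "span_mono n d \<longleftrightarrow>
     (\<forall>a' a b b'. 1 \<le> a' \<and> a' \<le> a \<and> a < b \<and> b \<le> b' \<and> b' \<le> n \<longrightarrow> d a b \<le> d a' b')"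

lemma span_monoD:
  "span_mono n d \<Longrightarrow> 1 \<le> a' \<Longrightarrow> a' \<le> a \<Longrightarrow> a < b \<Longrightarrow> b \<le> b' \<Longrightarrow> b' \<le> n \<Longrightarrow>
    d a b \<le> d a' b'"
  unfolding span_mono_def by blast

lemma dist_le_dist_if_prec_chain:
  assumes "prec a b" and "prec b c"
  shows "dist a b \<le> dist a c" and "dist b c \<le> dist a c"
  using less_imp_le[OF inner_pos_if_prec[OF assms]] by (rule dist_le_dist_if_inner_nonneg)+

lemma span_mono_dd:
  assumes "0 < \<alpha>" and chain: "\<And>i j. 1 \<le> i \<Longrightarrow> i < j \<Longrightarrow> j \<le> n \<Longrightarrow> prec (x i) (x j)"
  shows "span_mono n (dd \<alpha> x)"
  unfolding span_mono_def
proof (intro allI impI, elim conjE)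
  fix a' a b b' :: nat
  assume "1 \<le> a'" "a' \<le> a" "a < b" "b \<le> b'" "b' \<le> n"
  have "dist (x a) (x b) \<le> dist (x a') (x b)"
  proof (cases "a' = a")
    case False
    have "prec (x a') (x a)" "prec (x a) (x b)"
      using False \<open>1 \<le> a'\<close> \<open>a' \<le> a\<close> \<open>a < b\<close> \<open>b \<le> b'\<close> \<open>b' \<le> n\<close>
      by (simp_all add: chain)
    then show ?thesis
      by (rule dist_le_dist_if_prec_chain(2))
  qed simp
  also have "\<dots> \<le> dist (x a') (x b')"
  proof (cases "b = b'")
    case False
    have "prec (x a') (x b)" "prec (x b) (x b')"
      using False \<open>1 \<le> a'\<close> \<open>a' \<le> a\<close> \<open>a < b\<close> \<open>b \<le> b'\<close> \<open>b' \<le> n\<close>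
      by (simp_all add: chain)
    then show ?thesis
      by (rule dist_le_dist_if_prec_chain(1))
  qed simp
  finally show "dd \<alpha> x a b \<le> dd \<alpha> x a' b'"
    unfolding dd_def using \<open>0 < \<alpha>\<close> by (simp add: powr_mono2)
qed

lemma card_ge_2_obtains_less:
  fixes S :: "'a::linorder set"
  assumes "2 \<le> card S"
  obtains a b where "a \<in> S" "b \<in> S" "a < b"
proof -
  have "finite S" "S \<noteq> {}"
    using assms by (auto intro: card_ge_0_finite)
  have "Min S \<noteq> Max S"
  proof
    assume "Min S = Max S"
    then have "S \<subseteq> {Min S}"
      using Min_le[OF \<open>finite S\<close>] Max_ge[OF \<open>finite S\<close>] by (force intro: antisym)
    then show False
      using assms card_mono[of "{Min S}" S] by simp
  qed
  then show ?thesis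
    using that[of "Min S" "Max S"] \<open>finite S\<close> \<open>S \<noteq> {}\<close> by (simp add: order_neq_le_trans)
qed

definition pair_values :: "(nat \<Rightarrow> nat \<Rightarrow> 'a) \<Rightarrow> nat set \<Rightarrow> 'a set" where
  "pair_values d S = {d a b | a b. a \<in> S \<and> b \<in> S \<and> a < b}"

definition dispersion :: "(nat \<Rightarrow> nat \<Rightarrow> 'a::linorder) \<Rightarrow> nat \<Rightarrow> nat \<Rightarrow> 'a" where
  "dispersion d k i = Max ((\<lambda>S. Min (pair_values d S)) ` {S. S \<subseteq> {1..i} \<and> card S = k})"

lemma CMM_eq_dispersion: "CMM \<alpha> x k i = dispersion (dd \<alpha> x) k i"
  unfolding CMM_def dispersion_def pair_values_def ..

lemma finite_pair_values: "finite S \<Longrightarrow> finite (pair_values d S)"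
  unfolding pair_values_def
  by (rule finite_subset[of _ "(\<lambda>(a, b). d a b) ` (S \<times> S)"]) auto

lemma pair_values_mono: "T \<subseteq> S \<Longrightarrow> pair_values d T \<subseteq> pair_values d S"
  unfolding pair_values_def by blast

lemma Min_pair_values_le:
  "finite S \<Longrightarrow> a \<in> S \<Longrightarrow> b \<in> S \<Longrightarrow> a < b \<Longrightarrow> Min (pair_values d S) \<le> d a b"
  using finite_pair_values[of S d] by (intro Min_le) (auto simp: pair_values_def)

lemma pair_values_nonempty: "2 \<le> card S \<Longrightarrow> pair_values d S \<noteq> {}"
  unfolding pair_values_def by (elim card_ge_2_obtains_less) blast

lemma finite_subsets_card: "finite {S. S \<subseteq> {1..i::nat} \<and> card S = k}"
  by (rule finite_subset[of _ "Pow {1..i}"]) auto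

lemma dispersion_ge:
  "S \<subseteq> {1..i} \<Longrightarrow> card S = k \<Longrightarrow> Min (pair_values d S) \<le> dispersion d k i"
  unfolding dispersion_def by (rule Max_ge) (auto simp: finite_subsets_card)

lemma dispersion_attained:
  assumes "k \<le> i"
  obtains S where "S \<subseteq> {1..i}" "card S = k" "dispersion d k i = Min (pair_values d S)"
proof -
  have k_subset: "{1..k} \<in> {S. S \<subseteq> {1..i} \<and> card S = k}"
    using assms by auto
  have "dispersion d k i \<in> (\<lambda>S. Min (pair_values d S)) ` {S. S \<subseteq> {1..i} \<and> card S = k}"
    unfolding dispersion_def
    by (intro Max_in finite_imageI finite_subsets_card) (use k_subset in blast)
  then show ?thesis
    using that by blast
qed

lemma dispersion_two:
  assumes mono: "span_mono n d" and "2 \<le> i" "i \<le> n"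
  shows "dispersion d 2 i = d 1 i"
proof (rule antisym)
  obtain S where S: "S \<subseteq> {1..i}" "card S = 2" and opt: "dispersion d 2 i = Min (pair_values d S)"
    using dispersion_attained \<open>2 \<le> i\<close> by blast
  have "finite S"
    using S(1) by (rule finite_subset) simp
  obtain a b where "a \<in> S" "b \<in> S" "a < b"
    by (rule card_ge_2_obtains_less[of S]) (use S in auto)
  then have "dispersion d 2 i \<le> d a b"
    using opt \<open>finite S\<close> by (simp add: Min_pair_values_le)
  also have "\<dots> \<le> d 1 i"
    using \<open>a \<in> S\<close> \<open>b \<in> S\<close> \<open>a < b\<close> S \<open>i \<le> n\<close> by (intro span_monoD[OF mono]) auto
  finally show "dispersion d 2 i \<le> d 1 i" .
next
  have "1 < i"
    using \<open>2 \<le> i\<close> by simp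
  have "pair_values d {1, i} = {d 1 i}"
  proof
    show "pair_values d {1, i} \<subseteq> {d 1 i}"
      using \<open>1 < i\<close> unfolding pair_values_def by auto
    show "{d 1 i} \<subseteq> pair_values d {1, i}"
      using \<open>1 < i\<close> unfolding pair_values_def by blast
  qed
  then show "d 1 i \<le> dispersion d 2 i"
    using dispersion_ge[of "{1, i}" i 2 d] \<open>1 < i\<close> by simp
qed

lemma Min_pair_values_le_step:
  assumes mono: "span_mono n d" and "3 \<le> k" "i \<le> n"
    and S: "S \<subseteq> {1..i}" "card S = k"
  shows "\<exists>j\<in>{k - 1..i - 1}. Min (pair_values d S) \<le> min (dispersion d (k - 1) j) (d j i)"
proof -
  have "finite S" "S \<noteq> {}"
    using S \<open>3 \<le> k\<close> by (auto intro: finite_subset[OF _ finite_atLeastAtMost])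
  define m where "m = Max S"
  define T where "T = S - {m}"
  have "m \<in> S" "T \<subseteq> S"
    unfolding m_def T_def using \<open>finite S\<close> \<open>S \<noteq> {}\<close> by auto
  have "finite T" "card T = k - 1"
    unfolding T_def using \<open>finite S\<close> \<open>m \<in> S\<close> S by auto
  then have "T \<noteq> {}"
    using \<open>3 \<le> k\<close> by auto
  define j where "j = Max T"
  have "j \<in> T"
    unfolding j_def using \<open>finite T\<close> \<open>T \<noteq> {}\<close> by simp
  have "j \<le> m"
    using \<open>j \<in> T\<close> \<open>T \<subseteq> S\<close> \<open>finite S\<close> unfolding m_def by auto
  then have "j < m"
    using \<open>j \<in> T\<close> unfolding T_def by auto
  have T_sub: "T \<subseteq> {1..j}"
  proof
    fix t assume "t \<in> T"
    then have "t \<le> j" "1 \<le> t"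
      using \<open>finite T\<close> \<open>T \<subseteq> S\<close> S unfolding j_def by auto
    then show "t \<in> {1..j}"
      by simp
  qed
  have "k - 1 \<le> j"
    using card_mono[OF _ T_sub] \<open>card T = k - 1\<close> by simp
  moreover have "m \<le> i"
    using \<open>m \<in> S\<close> S by auto
  ultimately have j_range: "j \<in> {k - 1..i - 1}"
    using \<open>j < m\<close> by auto
  have "Min (pair_values d S) \<le> Min (pair_values d T)"
    using \<open>T \<subseteq> S\<close> \<open>card T = k - 1\<close> \<open>3 \<le> k\<close> \<open>finite S\<close>
    by (intro Min_antimono pair_values_mono pair_values_nonempty finite_pair_values) auto
  also have "\<dots> \<le> dispersion d (k - 1) j"
    using T_sub \<open>card T = k - 1\<close> by (rule dispersion_ge)
  finally have "Min (pair_values d S) \<le> dispersion d (k - 1) j" .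
  moreover have "Min (pair_values d S) \<le> d j m"
    using \<open>finite S\<close> \<open>j \<in> T\<close> \<open>T \<subseteq> S\<close> \<open>m \<in> S\<close> \<open>j < m\<close>
    by (intro Min_pair_values_le) auto
  moreover have "d j m \<le> d j i"
    using \<open>j \<in> T\<close> T_sub \<open>j < m\<close> \<open>m \<le> i\<close> \<open>i \<le> n\<close> by (intro span_monoD[OF mono]) auto
  ultimately show ?thesis
    using j_range by (meson min.boundedI order_trans)
qed

lemma step_le_dispersion:
  assumes mono: "span_mono n d" and "2 \<le> k" "i \<le> n" and j: "j \<in> {k - 1..i - 1}"
  shows "min (dispersion d (k - 1) j) (d j i) \<le> dispersion d k i"
proof -
  obtain T where T: "T \<subseteq> {1..j}" "card T = k - 1"
    and opt: "dispersion d (k - 1) j = Min (pair_values d T)"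
    by (rule dispersion_attained[of "k - 1" j d]) (use j in auto)
  have "finite T" "j < i"
    using T j \<open>2 \<le> k\<close> by (auto intro: finite_subset[OF _ finite_atLeastAtMost])
  then have "i \<notin> T"
    using T by auto
  define S where "S = insert i T"
  have "finite S" "card S = k" "S \<subseteq> {1..i}"
    unfolding S_def using T \<open>finite T\<close> \<open>i \<notin> T\<close> \<open>j < i\<close> \<open>2 \<le> k\<close> by auto
  have "min (dispersion d (k - 1) j) (d j i) \<le> v" if "v \<in> pair_values d S" for v
  proof -
    obtain a b where ab: "a \<in> S" "b \<in> S" "a < b" "v = d a b"
      using \<open>v \<in> pair_values d S\<close> unfolding pair_values_def by auto
    show ?thesis
    proof (cases "b = i")
      case True
      then have "a \<in> T"
        using ab S_def by auto
      then have "d j i \<le> d a b"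
        using T ab True \<open>j < i\<close> \<open>i \<le> n\<close> by (intro span_monoD[OF mono]) auto
      then show ?thesis
        using ab by (simp add: min.coboundedI2)
    next
      case False
      then have "a \<in> T" "b \<in> T"
        using ab T \<open>j < i\<close> unfolding S_def by auto
      then have "dispersion d (k - 1) j \<le> v"
        using opt ab \<open>finite T\<close> by (simp add: Min_pair_values_le)
      then show ?thesis
        by (rule min.coboundedI1)
    qed
  qed
  then have "min (dispersion d (k - 1) j) (d j i) \<le> Min (pair_values d S)"
    using \<open>finite S\<close> \<open>card S = k\<close> \<open>2 \<le> k\<close>
    by (simp add: Min_ge_iff finite_pair_values pair_values_nonempty)
  also have "\<dots> \<le> dispersion d k i"
    using \<open>S \<subseteq> {1..i}\<close> \<open>card S = k\<close> by (rule dispersion_ge)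
  finally show ?thesis .
qed

lemma dispersion_recursion:
  assumes mono: "span_mono n d" and "3 \<le> k" "k \<le> i" "i \<le> n"
  shows "dispersion d k i = Max ((\<lambda>j. min (dispersion d (k - 1) j) (d j i)) ` {k - 1..i - 1})"
proof (rule antisym)
  obtain S where S: "S \<subseteq> {1..i}" "card S = k" and opt: "dispersion d k i = Min (pair_values d S)"
    using dispersion_attained \<open>k \<le> i\<close> by blast
  then obtain j where j: "j \<in> {k - 1..i - 1}"
    and opt_le: "dispersion d k i \<le> min (dispersion d (k - 1) j) (d j i)"
    using Min_pair_values_le_step[OF mono \<open>3 \<le> k\<close> \<open>i \<le> n\<close> S] by auto
  have "min (dispersion d (k - 1) j) (d j i)
      \<le> Max ((\<lambda>j. min (dispersion d (k - 1) j) (d j i)) ` {k - 1..i - 1})"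
    by (rule Max_ge) (use j in auto)
  with opt_le show "dispersion d k i \<le> Max ((\<lambda>j. min (dispersion d (k - 1) j) (d j i)) ` {k - 1..i - 1})"
    by (rule order_trans)
next
  have "\<forall>j\<in>{k - 1..i - 1}. min (dispersion d (k - 1) j) (d j i) \<le> dispersion d k i"
    using step_le_dispersion[OF mono _ \<open>i \<le> n\<close>] \<open>3 \<le> k\<close> by simp
  then show "Max ((\<lambda>j. min (dispersion d (k - 1) j) (d j i)) ` {k - 1..i - 1}) \<le> dispersion d k i"
    using \<open>3 \<le> k\<close> \<open>k \<le> i\<close> by (simp add: Max_le_iff)
qed

theorem proposition9:
  fixes x :: "nat \<Rightarrow> real^2" and n p :: nat and \<alpha> :: real
  assumes "\<alpha> > 0"
    and "\<And>i j. 1 \<le> i \<Longrightarrow> i < j \<Longrightarrow> j \<le> n \<Longrightarrow> prec (x i) (x j)"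
    and "p \<ge> 2"
  shows "(\<forall>i\<in>{2..n}. CMM \<alpha> x 2 i = dd \<alpha> x 1 i) \<and>
         (\<forall>k\<in>{3..p}. \<forall>i\<in>{k..n}.
            CMM \<alpha> x k i = Max {min (CMM \<alpha> x (k - 1) j) (dd \<alpha> x j i) | j. j \<in> {k - 1..i - 1}})"
proof -
  have mono: "span_mono n (dd \<alpha> x)"
    using assms(1,2) by (rule span_mono_dd)
  have "{min (CMM \<alpha> x (k - 1) j) (dd \<alpha> x j i) | j. j \<in> {k - 1..i - 1}} =
        (\<lambda>j. min (dispersion (dd \<alpha> x) (k - 1) j) (dd \<alpha> x j i)) ` {k - 1..i - 1}" for k i
    by (auto simp: CMM_eq_dispersion)
  then show ?thesis
    using dispersion_two[OF mono] dispersion_recursion[OF mono] by (auto simp: CMM_eq_dispersion)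
qed

end
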